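(* Let $n\ge 1$ and $K,T\in\mathcal S_n$. Then \[ \frac{K^c+T^c}{2}=\left\{x\in\mathbb R^n:\ \mathrm{Outrad}\big((K-x)\cup(x-T)\big)\le 1\right\}. \]
   Context: $B(x,r)$ is the closed Euclidean ball. For $A\subseteq\mathbb R^n$, $A^c=\bigcap_{x\in A}B(x,1)$ (with $\emptyset^c=\mathbb R^n$). $\mathcal S_n$ is the class of all sets of the form $\bigcap_{x\in A}B(x,1)$, $A\subseteq\mathbb R^n$. For a set $A$, $\mathrm{Outrad}(A)$ is the out-radius: the infimum of $R\ge0$ such that $A\subseteq B(z,R)$ for some $z\in\mathbb R^n$. $K-x=\{k-x:k\in K\}$, $x-T=\{x-t:t\in T\}$, and the sum on the left is the Minkowski sum. *)

theory Defs
  imports "HOL-Analysis.Analysis" "HOL-Library.Extended_Real"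
begin

text \<open>A^c = intersection of closed unit balls centred at points of A (UNIV for A empty).\<close>
definition ccomp :: "'a::euclidean_space set \<Rightarrow> 'a set" where
  "ccomp A = (\<Inter>x\<in>A. cball x 1)"

definition Sn :: "'a::euclidean_space set set" where
  "Sn = {ccomp A | A. True}"

text \<open>Out-radius, valued in extended reals (infinity for unbounded sets).\<close>
definition Outrad :: "'a::euclidean_space set \<Rightarrow> ereal" where
  "Outrad A = Inf {ereal R | R. R \<ge> 0 \<and> (\<exists>z. A \<subseteq> cball z R)}"

end

theory Submission
  imports Defs
begin

(* Writing a point of (K^c + T^c)/2 as x = (a + b)/2 and putting z = (a - b)/2, we have
   a = x + z and b = x - z.  Now x + z lies in K^c iff K - x is contained in B(z,1), and
   x - z lies in T^c iff x - T is contained in B(z,1).  So x is such a midpoint iff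
   (K - x) \<union> (x - T) lies in some unit ball, and by compactness this is the same as having
   out-radius at most 1. *)

lemma mem_ccomp_iff: "x \<in> ccomp A \<longleftrightarrow> A \<subseteq> cball x 1"
  by (auto simp: ccomp_def dist_commute)

lemma mem_half_sums_iff:
  fixes x :: "'a::real_vector"
  shows "x \<in> {(1/2) *\<^sub>R (a + b) | a b. a \<in> A \<and> b \<in> B} \<longleftrightarrow> (\<exists>z. x + z \<in> A \<and> x - z \<in> B)"
proof
  assume "x \<in> {(1/2) *\<^sub>R (a + b) | a b. a \<in> A \<and> b \<in> B}"
  then obtain a b where "x = (1/2) *\<^sub>R (a + b)" "a \<in> A" "b \<in> B"
    by blast
  then have "x + (1/2) *\<^sub>R (a - b) \<in> A \<and> x - (1/2) *\<^sub>R (a - b) \<in> B"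
    by (simp add: algebra_simps flip: scaleR_add_left)
  then show "\<exists>z. x + z \<in> A \<and> x - z \<in> B" ..
next
  assume "\<exists>z. x + z \<in> A \<and> x - z \<in> B"
  then obtain z where "x + z \<in> A" "x - z \<in> B"
    by blast
  moreover have "x = (1/2) *\<^sub>R ((x + z) + (x - z))"
    by (simp flip: scaleR_add_left)
  ultimately show "x \<in> {(1/2) *\<^sub>R (a + b) | a b. a \<in> A \<and> b \<in> B}"
    by blast
qed

lemma translate_reflect_subset_cball_iff:
  fixes x z :: "'a::euclidean_space"
  shows "(\<lambda>k. k - x) ` K \<union> (\<lambda>t. x - t) ` T \<subseteq> cball z 1
         \<longleftrightarrow> x + z \<in> ccomp K \<and> x - z \<in> ccomp T"
proof -
  have "dist z (k - x) = dist (x + z) k" for k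
    by (simp add: dist_norm algebra_simps)
  moreover have "dist z (x - t) = dist (x - z) t" for t
    by (simp add: dist_norm algebra_simps norm_minus_commute)
  ultimately show ?thesis
    by (auto simp: mem_ccomp_iff image_subset_iff subset_iff)
qed

lemma ex_cball_superset_of_approx:
  fixes U :: "'a::heine_borel set" and r :: real
  assumes approx: "\<And>e. e > 0 \<Longrightarrow> \<exists>z. U \<subseteq> cball z (r + e)"
  shows "\<exists>z. U \<subseteq> cball z r"
proof (cases "U = {}")
  case False
  then obtain p where "p \<in> U"
    by blast
  define C where "C e = (\<Inter>u\<in>U. cball u (r + e))" for e
  have C_iff: "z \<in> C e \<longleftrightarrow> U \<subseteq> cball z (r + e)" for z e
    by (auto simp: C_def dist_commute)
  have "cball p (r + 1) \<inter> (\<Inter>e\<in>{0<..}. C e) \<noteq> {}"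
  proof (rule compact_imp_fip_image)
    show "closed (C e)" for e
      by (auto simp: C_def)
    fix E :: "real set" assume "finite E" "E \<subseteq> {0<..}"
    define e where "e = Min (insert 1 E)"
    have "e > 0" "e \<le> 1" and e_le: "\<And>d. d \<in> E \<Longrightarrow> e \<le> d"
      using \<open>finite E\<close> \<open>E \<subseteq> {0<..}\<close> by (auto simp: e_def)
    obtain z where z: "U \<subseteq> cball z (r + e)"
      using approx \<open>e > 0\<close> by blast
    have "z \<in> cball p (r + 1)"
      using z \<open>p \<in> U\<close> \<open>e \<le> 1\<close> by (auto simp: dist_commute)
    moreover have "z \<in> C d" if "d \<in> E" for d
      using z e_le[OF that] unfolding C_iff by (auto simp: subset_iff)
    ultimately show "cball p (r + 1) \<inter> (\<Inter>d\<in>E. C d) \<noteq> {}"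
      by blast
  qed simp
  then obtain z where "\<And>e. e > 0 \<Longrightarrow> U \<subseteq> cball z (r + e)"
    using C_iff by blast
  then have "U \<subseteq> cball z r"
    by (auto simp: subset_iff intro: field_le_epsilon)
  then show ?thesis ..
qed simp

lemma Outrad_le_iff:
  fixes U :: "'a::euclidean_space set"
  assumes "r \<ge> 0"
  shows "Outrad U \<le> ereal r \<longleftrightarrow> (\<exists>z. U \<subseteq> cball z r)"
proof
  assume le: "Outrad U \<le> ereal r"
  have "\<exists>z. U \<subseteq> cball z (r + e)" if "e > 0" for e
  proof -
    have "Outrad U < ereal (r + e)"
      using le \<open>e > 0\<close> by (simp add: order_le_less_trans)
    then obtain R z where "U \<subseteq> cball z R" "R < r + e"
      unfolding Outrad_def by (auto simp: Inf_less_iff)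
    then show ?thesis
      by (meson order.trans less_imp_le subset_cball)
  qed
  then show "\<exists>z. U \<subseteq> cball z r"
    by (rule ex_cball_superset_of_approx)
next
  assume "\<exists>z. U \<subseteq> cball z r"
  then show "Outrad U \<le> ereal r"
    using assms unfolding Outrad_def by (auto intro: Inf_lower)
qed

theorem lemma1p27:
  fixes K T :: "'a::euclidean_space set"
  assumes "K \<in> Sn" and "T \<in> Sn"
  shows "{(1/2) *\<^sub>R (a + b) | a b. a \<in> ccomp K \<and> b \<in> ccomp T}
         = {x. Outrad ((\<lambda>k. k - x) ` K \<union> (\<lambda>t. x - t) ` T) \<le> 1}"
proof (rule set_eqI)
  fix x :: 'a
  have "x \<in> {(1/2) *\<^sub>R (a + b) | a b. a \<in> ccomp K \<and> b \<in> ccomp T}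
        \<longleftrightarrow> (\<exists>z. x + z \<in> ccomp K \<and> x - z \<in> ccomp T)"
    by (rule mem_half_sums_iff)
  also have "\<dots> \<longleftrightarrow> (\<exists>z. (\<lambda>k. k - x) ` K \<union> (\<lambda>t. x - t) ` T \<subseteq> cball z 1)"
    by (simp only: translate_reflect_subset_cball_iff)
  also have "\<dots> \<longleftrightarrow> Outrad ((\<lambda>k. k - x) ` K \<union> (\<lambda>t. x - t) ` T) \<le> 1"
    by (simp only: Outrad_le_iff[of 1, simplified] one_ereal_def)
  finally show "x \<in> {(1/2) *\<^sub>R (a + b) | a b. a \<in> ccomp K \<and> b \<in> ccomp T}
                \<longleftrightarrow> x \<in> {x. Outrad ((\<lambda>k. k - x) ` K \<union> (\<lambda>t. x - t) ` T) \<le> 1}"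
    by simp
qed

end
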